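(* Given an $n$-qubit state $\lvert\psi\rangle$, let $\lvert\phi\rangle$ be a stabilizer state that maximizes the stabilizer fidelity, and let $S^* = \mathrm{Weyl}(\lvert\phi\rangle)$. Then \[\sum_{x \in S^*} p_\psi(x) \geq F_\mathcal{S}(\lvert\psi\rangle)^2.\]
   Context: For $x=(a,b)\in\mathbb F_2^{2n}$ the Weyl operator is $W_x = i^{a\cdot b}X^{a_1}Z^{b_1}\otimes\cdots\otimes X^{a_n}Z^{b_n}$; $p_\psi(x)=2^{-n}\langle\psi|W_x|\psi\rangle^2$; $\mathrm{Weyl}(\lvert\phi\rangle)=\{x\in\mathbb F_2^{2n}: W_x\lvert\phi\rangle=\pm\lvert\phi\rangle\}$; $F_\mathcal{S}(\lvert\psi\rangle)=\max_{\lvert\phi\rangle\text{ stabilizer}}\lvert\langle\phi|\psi\rangle\rvert^2$. *)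

theory Defs
  imports "Jordan_Normal_Form.Schur_Decomposition"
begin

text \<open>A computational basis index z < 2^n is read
  as a bit string, qubit k (k < n) being bit k of z. A point x = (a,b) of F_2^(2n) is
  encoded as a pair of naturals a, b < 2^n (bit strings of length n).\<close>

definition qdim :: "nat \<Rightarrow> nat" where "qdim n = 2 ^ n"

definition is_state :: "nat \<Rightarrow> complex vec \<Rightarrow> bool" where
  "is_state n v \<longleftrightarrow> dim_vec v = qdim n \<and> (\<Sum>i<qdim n. (cmod (v $ i))\<^sup>2) = 1"

definition braket :: "complex vec \<Rightarrow> complex vec \<Rightarrow> complex" where
  "braket u v = (\<Sum>i<dim_vec v. cnj (u $ i) * v $ i)"

definition weyl_index :: "nat \<Rightarrow> (nat \<times> nat) set" where
  "weyl_index n = {(a, b). a < qdim n \<and> b < qdim n}"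

definition bdot :: "nat \<Rightarrow> nat \<Rightarrow> nat \<Rightarrow> nat" where
  "bdot n a b = card {k. k < n \<and> bit a k \<and> bit b k}"

text \<open>W_x = i^(a.b) X^a1 Z^b1 (x) ... (x) X^an Z^bn; on basis states
  W_x |z> = i^(a.b) (-1)^(b.z) |z xor a>.\<close>
definition weyl_op :: "nat \<Rightarrow> nat \<times> nat \<Rightarrow> complex mat" where
  "weyl_op n x = (case x of (a, b) \<Rightarrow>
     mat (qdim n) (qdim n) (\<lambda>(w, z).
       if w = Bit_Operations.xor z a then \<i> ^ bdot n a b * (- 1) ^ bdot n b z else 0))"

definition p_psi :: "nat \<Rightarrow> complex vec \<Rightarrow> nat \<times> nat \<Rightarrow> real" where
  "p_psi n psi x = Re ((braket psi (weyl_op n x *\<^sub>v psi))\<^sup>2) / 2 ^ n"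

definition weyl_set :: "nat \<Rightarrow> complex vec \<Rightarrow> (nat \<times> nat) set" where
  "weyl_set n phi = {x \<in> weyl_index n.
     weyl_op n x *\<^sub>v phi = phi \<or> weyl_op n x *\<^sub>v phi = - phi}"

definition unitary_mat :: "nat \<Rightarrow> complex mat \<Rightarrow> bool" where
  "unitary_mat N U \<longleftrightarrow> U \<in> carrier_mat N N \<and> U * mat_adjoint U = 1\<^sub>m N"

text \<open>Clifford group: unitaries mapping Pauli (Weyl) operators to Pauli operators under
  conjugation (up to sign, since the W_x are Hermitian).\<close>
definition clifford :: "nat \<Rightarrow> complex mat \<Rightarrow> bool" where
  "clifford n U \<longleftrightarrow> unitary_mat (qdim n) U \<and>
     (\<forall>x \<in> weyl_index n. \<exists>y \<in> weyl_index n. \<exists>s \<in> {1, -1 :: complex}.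
        U * weyl_op n x * mat_adjoint U = s \<cdot>\<^sub>m weyl_op n y)"

definition stabilizer_state :: "nat \<Rightarrow> complex vec \<Rightarrow> bool" where
  "stabilizer_state n phi \<longleftrightarrow> (\<exists>U. clifford n U \<and> phi = U *\<^sub>v unit_vec (qdim n) 0)"

definition stab_fidelity :: "nat \<Rightarrow> complex vec \<Rightarrow> real" where
  "stab_fidelity n psi = Sup {(cmod (braket phi psi))\<^sup>2 | phi. stabilizer_state n phi}"

end

theory Submission
  imports Defs "HOL-Analysis.Convex"
begin

text \<open>Write \<open>\<phi> = U|0\<^sup>n\<rangle>\<close> with \<open>U\<close> Clifford. The \<open>2\<^sup>n\<close> diagonal Weyl operators
  \<open>Z\<^sub>b = W\<^sub>(\<^sub>0\<^sub>,\<^sub>b\<^sub>)\<close> fix \<open>|0\<^sup>n\<rangle>\<close>, so each conjugate \<open>U Z\<^sub>b U\<^sup>\<dagger> = \<plusminus>W\<^sub>y\<^sub>(\<^sub>b\<^sub>)\<close> fixes \<open>\<phi>\<close>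
  up to sign, and \<open>b \<mapsto> y(b)\<close> is injective because conjugation is. With \<open>v = U\<^sup>\<dagger>\<psi>\<close>,
  \<open>\<langle>\<psi>|W\<^sub>y\<^sub>(\<^sub>b\<^sub>)|\<psi>\<rangle> = \<plusminus>c\<^sub>b\<close> where \<open>c\<^sub>b = \<langle>v|Z\<^sub>b|v\<rangle> = \<Sum>\<^sub>z |v\<^sub>z|\<^sup>2 (-1)\<^sup>b\<^sup>\<cdot>\<^sup>z\<close>, and summing over
  \<open>b\<close> kills every \<open>z \<noteq> 0\<close>: \<open>\<Sum>\<^sub>b c\<^sub>b = 2\<^sup>n |v\<^sub>0|\<^sup>2 = 2\<^sup>n F\<close>, since \<open>v\<^sub>0 = \<langle>\<phi>|\<psi>\<rangle>\<close> and \<open>\<phi>\<close>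
  is optimal. Cauchy-Schwarz then gives
  \<open>F\<^sup>2 = (2\<^sup>-\<^sup>n \<Sum>\<^sub>b c\<^sub>b)\<^sup>2 \<le> 2\<^sup>-\<^sup>n \<Sum>\<^sub>b c\<^sub>b\<^sup>2 = \<Sum>\<^sub>b p\<^sub>\<psi>(y(b)) \<le> \<Sum>\<^sub>x\<^sub>\<in>\<^sub>S\<^sub>* p\<^sub>\<psi>(x)\<close>.\<close>

section \<open>Parity of bit-string dot products\<close>

lemma neg_one_power_card_sym_diff:
  assumes "finite A" "finite B"
  shows "(-1::'a::comm_ring_1) ^ card (sym_diff A B) = (-1) ^ card A * (-1) ^ card B"
proof -
  have "card (sym_diff A B) = card (A - B) + card (B - A)"
    by (rule card_Un_disjoint) (use assms in auto)
  moreover have "card A = card (A - B) + card (A \<inter> B)" "card B = card (B - A) + card (A \<inter> B)"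
    using card_Int_Diff[OF assms(1), of B] card_Int_Diff[OF assms(2), of A] by (simp_all add: Int_commute)
  moreover have "((-1::'a) ^ card (A \<inter> B))\<^sup>2 = 1"
    by (simp flip: power_mult)
  ultimately show ?thesis
    by (simp add: power_add power2_eq_square algebra_simps)
qed

lemma bdot_commute: "bdot n a b = bdot n b a"
  unfolding bdot_def by (simp add: conj_commute)

lemma bdot_0_left [simp]: "bdot n 0 b = 0"
  and bdot_0_right [simp]: "bdot n a 0 = 0"
  unfolding bdot_def by auto

lemma neg_one_power_bdot_xor:
  "(-1::'a::comm_ring_1) ^ bdot n a (Bit_Operations.xor b c) = (-1) ^ bdot n a b * (-1) ^ bdot n a c"
proof -
  let ?B = "{k. k < n \<and> bit a k \<and> bit b k}" and ?C = "{k. k < n \<and> bit a k \<and> bit c k}"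
  have "{k. k < n \<and> bit a k \<and> bit (Bit_Operations.xor b c) k} = sym_diff ?B ?C"
    by (auto simp: bit_xor_iff)
  then show ?thesis
    unfolding bdot_def by (simp add: neg_one_power_card_sym_diff)
qed

lemma bdot_two_power: "k < n \<Longrightarrow> bdot n a (2 ^ k) = of_bool (bit a k)"
proof -
  assume "k < n"
  then have "{j. j < n \<and> bit a j \<and> bit ((2::nat) ^ k) j} = (if bit a k then {k} else {})"
    by (auto simp: bit_exp_iff)
  then show ?thesis
    unfolding bdot_def by simp
qed

lemma xor_less_two_power: "(a::nat) < 2 ^ n \<Longrightarrow> b < 2 ^ n \<Longrightarrow> Bit_Operations.xor a b < 2 ^ n"
  by (metis take_bit_nat_eq_self_iff take_bit_xor)

lemma less_two_power_bit_imp_less: "(a::nat) < 2 ^ n \<Longrightarrow> bit a k \<Longrightarrow> k < n"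
  by (metis bit_take_bit_iff take_bit_nat_eq_self_iff)

text \<open>Character orthogonality: if bit \<open>k\<close> of \<open>z\<close> is set, flipping bit \<open>k\<close> of \<open>b\<close> is an
  involution that negates \<open>(-1)\<^sup>b\<^sup>\<cdot>\<^sup>z\<close>, so the terms cancel in pairs.\<close>
lemma sum_neg_one_power_bdot:
  assumes "z < 2 ^ n"
  shows "(\<Sum>b<2 ^ n. (-1::real) ^ bdot n b z) = (if z = 0 then 2 ^ n else 0)"
proof (cases "z = 0")
  case False
  then obtain k where k: "bit z k"
    using bit_eq_iff[of z 0] by auto
  with assms have "k < n"
    by (rule less_two_power_bit_imp_less)
  let ?flip = "\<lambda>b::nat. Bit_Operations.xor b (2 ^ k)"
  let ?g = "\<lambda>b. (-1::real) ^ bdot n b z"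
  have "?g (?flip b) = - ?g b" for b
    using k \<open>k < n\<close>
    by (simp add: bdot_commute[of n _ z] neg_one_power_bdot_xor bdot_two_power)
  moreover have "?flip b < 2 ^ n" if "b < 2 ^ n" for b
    using that \<open>k < n\<close> by (simp add: xor_less_two_power)
  ultimately have "sum ?g {..<2 ^ n} = sum (\<lambda>b. - ?g b) {..<2 ^ n}"
    by (intro sum.reindex_bij_witness[where i = ?flip and j = ?flip]) (auto simp: xor.assoc)
  with False show ?thesis
    by (simp add: sum_negf)
qed simp

section \<open>Bra-kets and adjoints\<close>

lemma mat_adjoint_carrier: "A \<in> carrier_mat m n \<Longrightarrow> mat_adjoint A \<in> carrier_mat n m"
  unfolding mat_adjoint_def by auto

lemma index_mat_adjoint:
  "A \<in> carrier_mat m n \<Longrightarrow> i < n \<Longrightarrow> j < m \<Longrightarrow> mat_adjoint A $$ (i, j) = cnj (A $$ (j, i))"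
  unfolding mat_adjoint_def by (simp add: mat_of_rows_index)

lemma unitary_mat_adjoint_mult:
  assumes "unitary_mat N U"
  shows "mat_adjoint U * U = 1\<^sub>m N"
proof -
  have U: "U \<in> carrier_mat N N" "U * mat_adjoint U = 1\<^sub>m N"
    using assms unfolding unitary_mat_def by auto
  show ?thesis
    by (rule mat_mult_left_right_inverse[OF U(1) mat_adjoint_carrier[OF U(1)] U(2)])
qed

lemma adjoint_conj_mult_vec:
  assumes "U \<in> carrier_mat N N" "M \<in> carrier_mat N N" "dim_vec w = N"
  shows "(U * M * mat_adjoint U) *\<^sub>v w = U *\<^sub>v (M *\<^sub>v (mat_adjoint U *\<^sub>v w))"
proof -
  have "mat_adjoint U \<in> carrier_mat N N" "w \<in> carrier_vec N"
    using assms mat_adjoint_carrier by (auto intro: carrier_vecI)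
  then show ?thesis
    using assms(1,2) assoc_mult_mat_vec[of "U * M" N N "mat_adjoint U" N w]
      assoc_mult_mat_vec[of U N N M N "mat_adjoint U *\<^sub>v w"] by auto
qed

lemma smult_mat_mult_vec: "dim_vec w = dim_col A \<Longrightarrow> (k \<cdot>\<^sub>m A) *\<^sub>v w = k \<cdot>\<^sub>v (A *\<^sub>v w)"
  for A :: "'a::comm_ring mat"
  by (intro eq_vecI) (auto simp: scalar_prod_def sum_distrib_left ac_simps)

lemma smult_smult_mat: "k \<cdot>\<^sub>m (l \<cdot>\<^sub>m A) = (k * l) \<cdot>\<^sub>m A"
  for A :: "'a::semigroup_mult mat"
  by (intro eq_matI) (auto simp: mult.assoc)

lemma one_smult_mat: "1 \<cdot>\<^sub>m A = A"
  for A :: "'a::monoid_mult mat"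
  by (intro eq_matI) auto

lemma adjoint_conj_smult:
  assumes "U \<in> carrier_mat N N" "M \<in> carrier_mat N N"
  shows "U * (k \<cdot>\<^sub>m M) * mat_adjoint U = k \<cdot>\<^sub>m (U * M * mat_adjoint U)"
  by (simp only: mult_smult_distrib[OF assms]
      mult_smult_assoc_mat[OF mult_carrier_mat[OF assms] mat_adjoint_carrier[OF assms(1)]])

lemma unitary_conj_cancel:
  assumes "unitary_mat N U" "M \<in> carrier_mat N N"
  shows "mat_adjoint U * (U * M * mat_adjoint U) * U = M"
proof -
  have U: "U \<in> carrier_mat N N" "mat_adjoint U \<in> carrier_mat N N"
    using assms(1) mat_adjoint_carrier unfolding unitary_mat_def by auto
  then have "mat_adjoint U * (U * M * mat_adjoint U) * U = (mat_adjoint U * U) * M * (mat_adjoint U * U)"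
    using assms(2) by (simp add: assoc_mult_mat[of _ N N _ N _ N])
  then show ?thesis
    using assms by (simp add: unitary_mat_adjoint_mult)
qed

lemma unitary_conj_inj:
  assumes "unitary_mat N U" "M \<in> carrier_mat N N" "M' \<in> carrier_mat N N"
    and "U * M * mat_adjoint U = U * M' * mat_adjoint U"
  shows "M = M'"
  using assms unitary_conj_cancel by metis

lemma braket_smult_right: "braket u (k \<cdot>\<^sub>v w) = k * braket u w"
  unfolding braket_def by (simp add: sum_distrib_left ac_simps)

lemma cnj_braket: "dim_vec u = dim_vec w \<Longrightarrow> cnj (braket u w) = braket w u"
  unfolding braket_def by (simp add: mult.commute)

lemma braket_unit_vec: "k < N \<Longrightarrow> dim_vec w = N \<Longrightarrow> braket (unit_vec N k) w = w $ k"
proof -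
  assume "k < N" "dim_vec w = N"
  then have "braket (unit_vec N k) w = (\<Sum>i<N. if i = k then w $ i else 0)"
    unfolding braket_def by (intro sum.cong) auto
  with \<open>k < N\<close> show ?thesis
    by simp
qed

lemma braket_mult_mat_vec_right:
  assumes A: "A \<in> carrier_mat N N" and "dim_vec u = N" "dim_vec w = N"
  shows "braket u (A *\<^sub>v w) = braket (mat_adjoint A *\<^sub>v u) w"
proof -
  have "braket u (A *\<^sub>v w) = (\<Sum>i<N. cnj (u $ i) * (\<Sum>j<N. A $$ (i, j) * w $ j))"
    unfolding braket_def using assms by (simp add: scalar_prod_def lessThan_atLeast0)
  also have "\<dots> = (\<Sum>i<N. \<Sum>j<N. cnj (u $ i) * A $$ (i, j) * w $ j)"
    by (simp add: sum_distrib_left mult.assoc)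
  also have "\<dots> = (\<Sum>j<N. \<Sum>i<N. cnj (u $ i) * A $$ (i, j) * w $ j)"
    by (rule sum.swap)
  also have "\<dots> = (\<Sum>j<N. cnj (\<Sum>i<N. cnj (A $$ (i, j)) * u $ i) * w $ j)"
    by (simp add: sum_distrib_right sum_distrib_left mult.commute)
  also have "\<dots> = braket (mat_adjoint A *\<^sub>v u) w"
    unfolding braket_def using assms mat_adjoint_carrier[OF A]
    by (auto simp: scalar_prod_def lessThan_atLeast0 index_mat_adjoint[OF A] intro!: sum.cong)
  finally show ?thesis .
qed

lemma braket_mult_mat_vec_left:
  assumes "A \<in> carrier_mat N N" "dim_vec u = N" "dim_vec w = N"
  shows "braket (A *\<^sub>v u) w = braket u (mat_adjoint A *\<^sub>v w)"
proof -
  have "braket (A *\<^sub>v u) w = cnj (braket w (A *\<^sub>v u))"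
    using assms by (simp add: cnj_braket)
  also have "\<dots> = cnj (braket (mat_adjoint A *\<^sub>v w) u)"
    using assms by (simp add: braket_mult_mat_vec_right)
  also have "\<dots> = braket u (mat_adjoint A *\<^sub>v w)"
    using assms mat_adjoint_carrier[OF assms(1)] by (simp add: cnj_braket)
  finally show ?thesis .
qed

lemma braket_unitary_basis_state:
  assumes "unitary_mat N U" "k < N" "dim_vec psi = N"
  shows "braket (U *\<^sub>v unit_vec N k) psi = (mat_adjoint U *\<^sub>v psi) $ k"
proof -
  have U: "U \<in> carrier_mat N N"
    using assms(1) by (simp add: unitary_mat_def)
  then have "braket (U *\<^sub>v unit_vec N k) psi = braket (unit_vec N k) (mat_adjoint U *\<^sub>v psi)"
    using assms(3) by (simp add: braket_mult_mat_vec_left)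
  also have "\<dots> = (mat_adjoint U *\<^sub>v psi) $ k"
    using assms(2) mat_adjoint_carrier[OF U] by (simp add: braket_unit_vec)
  finally show ?thesis .
qed

lemma braket_self_adjoint_real:
  assumes "A \<in> carrier_mat N N" "mat_adjoint A = A" "dim_vec v = N"
  shows "Im (braket v (A *\<^sub>v v)) = 0"
proof -
  have "braket v (A *\<^sub>v v) = braket (A *\<^sub>v v) v"
    using braket_mult_mat_vec_right[OF assms(1,3,3)] assms(2) by simp
  also have "\<dots> = cnj (braket v (A *\<^sub>v v))"
    using assms by (simp add: cnj_braket)
  finally have "Im (braket v (A *\<^sub>v v)) = Im (cnj (braket v (A *\<^sub>v v)))"
    by (rule arg_cong)
  then show ?thesis
    by simp
qed

section \<open>Weyl operators\<close>

lemma weyl_op_carrier: "weyl_op n x \<in> carrier_mat (qdim n) (qdim n)"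
  unfolding weyl_op_def by (cases x) auto

text \<open>Hermiticity: conjugating \<open>\<i>\<^sup>a\<^sup>\<cdot>\<^sup>b\<close> produces the sign \<open>(-1)\<^sup>a\<^sup>\<cdot>\<^sup>b\<close>, which is exactly the
  change of \<open>(-1)\<^sup>b\<^sup>\<cdot>\<^sup>z\<close> when the column \<open>z\<close> is replaced by the row \<open>z \<oplus> a\<close>.\<close>
lemma mat_adjoint_weyl_op: "mat_adjoint (weyl_op n x) = weyl_op n x"
proof -
  obtain a b where x: "x = (a, b)"
    by (cases x)
  have cnj_i_power: "cnj (\<i> ^ m) = (-1) ^ m * \<i> ^ m" for m :: nat
    by (simp flip: power_mult_distrib)
  have "cnj (weyl_op n x $$ (j, i)) = weyl_op n x $$ (i, j)" if "i < qdim n" "j < qdim n" for i j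
  proof (cases "i = Bit_Operations.xor j a")
    case True
    then have "j = Bit_Operations.xor i a"
      by (simp add: xor.assoc)
    moreover from True have "cnj (\<i> ^ bdot n a b * (-1) ^ bdot n b i) = \<i> ^ bdot n a b * (-1) ^ bdot n b j"
      by (simp add: cnj_i_power neg_one_power_bdot_xor bdot_commute[of n b a] mult_ac
          flip: power_mult_distrib)
    ultimately show ?thesis
      using that True unfolding weyl_op_def x by simp
  next
    case False
    then have "j \<noteq> Bit_Operations.xor i a"
      by (auto simp: xor.assoc)
    with that False show ?thesis
      unfolding weyl_op_def x by simp
  qed
  then show ?thesis
    using weyl_op_carrier[of n x] mat_adjoint_carrier[OF weyl_op_carrier[of n x]]
    by (intro eq_matI) (auto simp: index_mat_adjoint[OF weyl_op_carrier])
qed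

lemma p_psi_nonneg:
  assumes "dim_vec psi = qdim n"
  shows "0 \<le> p_psi n psi x"
proof -
  let ?c = "braket psi (weyl_op n x *\<^sub>v psi)"
  have "Im ?c = 0"
    using braket_self_adjoint_real[OF weyl_op_carrier mat_adjoint_weyl_op assms] .
  then have "Re (?c\<^sup>2) = (Re ?c)\<^sup>2"
    by (simp add: power2_eq_square)
  then show ?thesis
    unfolding p_psi_def by simp
qed

lemma finite_weyl_set: "finite (weyl_set n phi)"
proof (rule finite_subset)
  show "weyl_set n phi \<subseteq> {..<qdim n} \<times> {..<qdim n}"
    unfolding weyl_set_def weyl_index_def by auto
qed auto

definition z_expectation :: "nat \<Rightarrow> complex vec \<Rightarrow> nat \<Rightarrow> real" where
  "z_expectation n v b = (\<Sum>z<qdim n. (cmod (v $ z))\<^sup>2 * (-1) ^ bdot n b z)"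

lemma index_weyl_op_diag:
  "i < qdim n \<Longrightarrow> j < qdim n \<Longrightarrow> weyl_op n (0, b) $$ (i, j) = (if i = j then (-1) ^ bdot n b j else 0)"
  unfolding weyl_op_def by simp

lemma weyl_op_diag_mult_vec:
  assumes "dim_vec v = qdim n"
  shows "weyl_op n (0, b) *\<^sub>v v = vec (qdim n) (\<lambda>z. (-1) ^ bdot n b z * v $ z)"
proof (rule eq_vecI)
  fix i
  assume "i < dim_vec (vec (qdim n) (\<lambda>z. (-1) ^ bdot n b z * v $ z))"
  then have i: "i < qdim n"
    by simp
  then have "(weyl_op n (0, b) *\<^sub>v v) $ i = (\<Sum>j<qdim n. if i = j then (-1) ^ bdot n b j * v $ j else 0)"
    using assms weyl_op_carrier[of n "(0, b)"]
    by (auto simp: scalar_prod_def lessThan_atLeast0 index_weyl_op_diag if_distrib[of "\<lambda>x. x * _"]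
        cong: if_cong intro!: sum.cong)
  with i show "(weyl_op n (0, b) *\<^sub>v v) $ i = vec (qdim n) (\<lambda>z. (-1) ^ bdot n b z * v $ z) $ i"
    by simp
qed (use weyl_op_carrier[of n "(0, b)"] in simp)

lemma weyl_op_diag_unit_vec_0: "weyl_op n (0, b) *\<^sub>v unit_vec (qdim n) 0 = unit_vec (qdim n) 0"
  by (rule eq_vecI) (auto simp: weyl_op_diag_mult_vec)

lemma braket_weyl_op_diag:
  assumes "dim_vec v = qdim n"
  shows "braket v (weyl_op n (0, b) *\<^sub>v v) = complex_of_real (z_expectation n v b)"
proof -
  have "braket v (weyl_op n (0, b) *\<^sub>v v) = (\<Sum>z<qdim n. cnj (v $ z) * ((-1) ^ bdot n b z * v $ z))"
    unfolding braket_def using assms by (simp add: weyl_op_diag_mult_vec)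
  also have "\<dots> = (\<Sum>z<qdim n. complex_of_real ((cmod (v $ z))\<^sup>2 * (-1) ^ bdot n b z))"
    unfolding of_real_mult complex_norm_square by (simp add: mult_ac)
  finally show ?thesis
    by (simp add: z_expectation_def)
qed

lemma sum_z_expectation: "(\<Sum>b<qdim n. z_expectation n v b) = qdim n * (cmod (v $ 0))\<^sup>2"
proof -
  have "(\<Sum>b<qdim n. z_expectation n v b)
      = (\<Sum>z<qdim n. (cmod (v $ z))\<^sup>2 * (\<Sum>b<qdim n. (-1::real) ^ bdot n b z))"
    unfolding z_expectation_def by (subst sum.swap) (simp add: sum_distrib_left)
  also have "\<dots> = (\<Sum>z<qdim n. if z = 0 then qdim n * (cmod (v $ z))\<^sup>2 else 0)"
    by (intro sum.cong refl) (simp add: sum_neg_one_power_bdot qdim_def)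
  also have "\<dots> = qdim n * (cmod (v $ 0))\<^sup>2"
    by (simp add: qdim_def)
  finally show ?thesis .
qed

lemma weyl_op_diag_eq_smult_imp_eq:
  assumes "b < qdim n" "b' < qdim n" and eq: "weyl_op n (0, b) = t \<cdot>\<^sub>m weyl_op n (0, b')"
  shows "b = b'"
proof -
  have diag: "(-1) ^ bdot n b z = t * (-1) ^ bdot n b' z" if "z < qdim n" for z
    using arg_cong[OF eq, of "\<lambda>A. A $$ (z, z)"] that weyl_op_carrier[of n "(0, b')"]
    by (simp add: index_weyl_op_diag)
  from diag[of 0] have "t = 1"
    by (simp add: qdim_def)
  show ?thesis
  proof (rule bit_eqI)
    fix k
    show "bit b k = bit b' k"
    proof (cases "k < n")
      case True
      then have "(2::nat) ^ k < qdim n"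
        by (simp add: qdim_def)
      with diag[OF this] \<open>t = 1\<close> True have "(-1::complex) ^ of_bool (bit b k) = (-1) ^ of_bool (bit b' k)"
        by (simp add: bdot_two_power)
      then show ?thesis
        by (cases "bit b k"; cases "bit b' k") simp_all
    next
      case False
      with assms(1,2) show ?thesis
        using less_two_power_bit_imp_less[of b n k] less_two_power_bit_imp_less[of b' n k]
        by (auto simp: qdim_def)
    qed
  qed
qed

section \<open>Conjugating diagonal Weyl operators by a Clifford unitary\<close>

lemma clifford_unitary: "clifford n U \<Longrightarrow> unitary_mat (qdim n) U"
  unfolding clifford_def by simp

lemma clifford_conj_weyl_op_diag:
  assumes "clifford n U"
  obtains y s where "\<And>b. b < qdim n \<Longrightarrow> y b \<in> weyl_index n" "\<And>b. b < qdim n \<Longrightarrow> s b \<in> {1, -1}"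
    "\<And>b. b < qdim n \<Longrightarrow> weyl_op n (y b) = s b \<cdot>\<^sub>m (U * weyl_op n (0, b) * mat_adjoint U)"
proof -
  have "\<exists>y s. y \<in> weyl_index n \<and> s \<in> {1, -1} \<and>
      weyl_op n y = s \<cdot>\<^sub>m (U * weyl_op n (0, b) * mat_adjoint U)" if "b < qdim n" for b
  proof -
    have "(0, b) \<in> weyl_index n"
      using that by (simp add: weyl_index_def qdim_def)
    with assms obtain y s where y: "y \<in> weyl_index n" "s \<in> {1, -1 :: complex}"
        and conj: "U * weyl_op n (0, b) * mat_adjoint U = s \<cdot>\<^sub>m weyl_op n y"
      unfolding clifford_def by blast
    from y(2) have "s * s = 1"
      by auto
    with conj have "weyl_op n y = s \<cdot>\<^sub>m (U * weyl_op n (0, b) * mat_adjoint U)"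
      by (simp add: smult_smult_mat one_smult_mat)
    with y show ?thesis
      by blast
  qed
  then show ?thesis
    using that by metis
qed

lemma conj_weyl_op_diag_mult_vec:
  assumes "unitary_mat (qdim n) U" "dim_vec w = qdim n"
    and "weyl_op n y = s \<cdot>\<^sub>m (U * weyl_op n (0, b) * mat_adjoint U)"
  shows "weyl_op n y *\<^sub>v w = s \<cdot>\<^sub>v (U *\<^sub>v (weyl_op n (0, b) *\<^sub>v (mat_adjoint U *\<^sub>v w)))"
proof -
  have U: "U \<in> carrier_mat (qdim n) (qdim n)"
    using assms(1) by (simp add: unitary_mat_def)
  have "dim_vec w = dim_col (U * weyl_op n (0, b) * mat_adjoint U)"
    using assms(2) mat_adjoint_carrier[OF U] by simp
  then show ?thesis
    unfolding assms(3)
    by (simp only: smult_mat_mult_vec adjoint_conj_mult_vec[OF U weyl_op_carrier assms(2)])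
qed

lemma conj_weyl_op_diag_stabilizes:
  assumes "unitary_mat (qdim n) U"
    and "weyl_op n y = s \<cdot>\<^sub>m (U * weyl_op n (0, b) * mat_adjoint U)"
  shows "weyl_op n y *\<^sub>v (U *\<^sub>v unit_vec (qdim n) 0) = s \<cdot>\<^sub>v (U *\<^sub>v unit_vec (qdim n) 0)"
proof -
  have U: "U \<in> carrier_mat (qdim n) (qdim n)"
    using assms(1) by (simp add: unitary_mat_def)
  have "mat_adjoint U *\<^sub>v (U *\<^sub>v unit_vec (qdim n) 0) = unit_vec (qdim n) 0"
    using U mat_adjoint_carrier[OF U] unitary_mat_adjoint_mult[OF assms(1)]
    by (metis assoc_mult_mat_vec one_mult_mat_vec unit_vec_carrier)
  then show ?thesis
    using conj_weyl_op_diag_mult_vec[OF assms(1) _ assms(2)] U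
    by (simp add: weyl_op_diag_unit_vec_0)
qed

lemma conj_weyl_op_diag_expectation:
  assumes "unitary_mat (qdim n) U" "dim_vec psi = qdim n"
    and "weyl_op n y = s \<cdot>\<^sub>m (U * weyl_op n (0, b) * mat_adjoint U)"
  shows "braket psi (weyl_op n y *\<^sub>v psi) = s * z_expectation n (mat_adjoint U *\<^sub>v psi) b"
proof -
  let ?v = "mat_adjoint U *\<^sub>v psi"
  have U: "U \<in> carrier_mat (qdim n) (qdim n)"
    using assms(1) by (simp add: unitary_mat_def)
  have v: "dim_vec ?v = qdim n"
    using mat_adjoint_carrier[OF U] by simp
  have "braket psi (weyl_op n y *\<^sub>v psi) = s * braket psi (U *\<^sub>v (weyl_op n (0, b) *\<^sub>v ?v))"
    by (simp add: conj_weyl_op_diag_mult_vec[OF assms] braket_smult_right)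
  also have "braket psi (U *\<^sub>v (weyl_op n (0, b) *\<^sub>v ?v)) = braket ?v (weyl_op n (0, b) *\<^sub>v ?v)"
    using U assms(2) v weyl_op_carrier[of n "(0, b)"] by (simp add: braket_mult_mat_vec_right)
  also have "\<dots> = z_expectation n ?v b"
    using v by (rule braket_weyl_op_diag)
  finally show ?thesis .
qed

lemma conj_weyl_op_diag_inj:
  assumes unitary: "unitary_mat (qdim n) U" and "b < qdim n" "b' < qdim n" "s \<in> {1, -1}"
    and "weyl_op n y = s \<cdot>\<^sub>m (U * weyl_op n (0, b) * mat_adjoint U)"
    and "weyl_op n y = s' \<cdot>\<^sub>m (U * weyl_op n (0, b') * mat_adjoint U)"
  shows "b = b'"
proof -
  have U: "U \<in> carrier_mat (qdim n) (qdim n)"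
    using unitary by (simp add: unitary_mat_def)
  have "s * s = 1"
    using assms(4) by auto
  then have "U * weyl_op n (0, b) * mat_adjoint U = s \<cdot>\<^sub>m weyl_op n y"
    using assms(5) by (simp add: smult_smult_mat one_smult_mat)
  also have "\<dots> = U * ((s * s') \<cdot>\<^sub>m weyl_op n (0, b')) * mat_adjoint U"
    using assms(6) by (simp add: smult_smult_mat adjoint_conj_smult[OF U weyl_op_carrier])
  finally have "weyl_op n (0, b) = (s * s') \<cdot>\<^sub>m weyl_op n (0, b')"
    by (rule unitary_conj_inj[OF unitary weyl_op_carrier smult_carrier_mat[OF weyl_op_carrier]])
  with assms(2,3) show ?thesis
    by (rule weyl_op_diag_eq_smult_imp_eq)
qed

lemma clifford_weyl_set_embedding:
  assumes "clifford n U" "dim_vec psi = qdim n"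
  obtains y where "inj_on y {..<qdim n}"
    "y ` {..<qdim n} \<subseteq> weyl_set n (U *\<^sub>v unit_vec (qdim n) 0)"
    "\<And>b. b < qdim n \<Longrightarrow> p_psi n psi (y b) = (z_expectation n (mat_adjoint U *\<^sub>v psi) b)\<^sup>2 / 2 ^ n"
proof -
  let ?N = "qdim n" and ?Z = "\<lambda>b. weyl_op n (0, b)"
  have unitary: "unitary_mat ?N U"
    using assms(1) by (rule clifford_unitary)
  obtain y s where y: "\<And>b. b < ?N \<Longrightarrow> y b \<in> weyl_index n"
    and s: "\<And>b. b < ?N \<Longrightarrow> s b \<in> {1, -1}"
    and conj: "\<And>b. b < ?N \<Longrightarrow> weyl_op n (y b) = s b \<cdot>\<^sub>m (U * ?Z b * mat_adjoint U)"
    using clifford_conj_weyl_op_diag[OF assms(1)] by blast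
  show ?thesis
  proof
    show "inj_on y {..<?N}"
    proof (rule inj_onI)
      fix b b'
      assume "b \<in> {..<?N}" "b' \<in> {..<?N}" and "y b = y b'"
      then have "b < ?N" "b' < ?N" "weyl_op n (y b) = s b' \<cdot>\<^sub>m (U * ?Z b' * mat_adjoint U)"
        using conj by auto
      then show "b = b'"
        using conj_weyl_op_diag_inj[OF unitary _ _ s conj] by blast
    qed
  next
    show "y ` {..<?N} \<subseteq> weyl_set n (U *\<^sub>v unit_vec ?N 0)"
    proof (rule image_subsetI)
      fix b
      assume "b \<in> {..<?N}"
      then have "b < ?N"
        by simp
      have "s b \<cdot>\<^sub>v (U *\<^sub>v unit_vec ?N 0) = U *\<^sub>v unit_vec ?N 0
          \<or> s b \<cdot>\<^sub>v (U *\<^sub>v unit_vec ?N 0) = - (U *\<^sub>v unit_vec ?N 0)"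
        using s[OF \<open>b < ?N\<close>] by (auto intro!: eq_vecI)
      with y[OF \<open>b < ?N\<close>] conj_weyl_op_diag_stabilizes[OF unitary conj[OF \<open>b < ?N\<close>]]
      show "y b \<in> weyl_set n (U *\<^sub>v unit_vec ?N 0)"
        unfolding weyl_set_def by simp
    qed
  next
    fix b
    assume "b < ?N"
    let ?c = "z_expectation n (mat_adjoint U *\<^sub>v psi) b"
    have "braket psi (weyl_op n (y b) *\<^sub>v psi) = s b * ?c"
      using conj_weyl_op_diag_expectation[OF unitary assms(2) conj[OF \<open>b < ?N\<close>]] .
    moreover have "(s b * ?c)\<^sup>2 = complex_of_real (?c\<^sup>2)"
      using s[OF \<open>b < ?N\<close>] by (auto simp: power2_eq_square)
    ultimately show "p_psi n psi (y b) = ?c\<^sup>2 / 2 ^ n"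
      unfolding p_psi_def by simp
  qed
qed

lemma stab_fidelity_eq_optimal:
  assumes "stabilizer_state n phi"
    and "\<forall>phi'. stabilizer_state n phi' \<longrightarrow> (cmod (braket phi' psi))\<^sup>2 \<le> (cmod (braket phi psi))\<^sup>2"
  shows "stab_fidelity n psi = (cmod (braket phi psi))\<^sup>2"
  unfolding stab_fidelity_def
  by (rule cSup_eq_maximum) (use assms in auto)

theorem lemma5p2:
  fixes n :: nat and psi phi :: "complex vec"
  assumes "is_state n psi"
    and "stabilizer_state n phi"
    and "\<forall>phi'. stabilizer_state n phi' \<longrightarrow>
           (cmod (braket phi' psi))\<^sup>2 \<le> (cmod (braket phi psi))\<^sup>2"
  shows "(\<Sum>x \<in> weyl_set n phi. p_psi n psi x) \<ge> (stab_fidelity n psi)\<^sup>2"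
proof -
  let ?N = "qdim n"
  have "0 < ?N"
    by (simp add: qdim_def)
  have psi: "dim_vec psi = ?N"
    using assms(1) by (simp add: is_state_def)
  obtain U where U: "clifford n U" and phi: "phi = U *\<^sub>v unit_vec ?N 0"
    using assms(2) by (auto simp: stabilizer_state_def)
  define c where "c = z_expectation n (mat_adjoint U *\<^sub>v psi)"
  obtain y where inj: "inj_on y {..<?N}" and sub: "y ` {..<?N} \<subseteq> weyl_set n phi"
    and p: "\<And>b. b < ?N \<Longrightarrow> p_psi n psi (y b) = (c b)\<^sup>2 / 2 ^ n"
    using clifford_weyl_set_embedding[OF U psi] unfolding phi c_def by blast
  have "stab_fidelity n psi = (cmod ((mat_adjoint U *\<^sub>v psi) $ 0))\<^sup>2"
    using stab_fidelity_eq_optimal[OF assms(2,3)] braket_unitary_basis_state[OF clifford_unitary[OF U] _ psi]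
    by (simp add: phi qdim_def)
  then have "stab_fidelity n psi = (\<Sum>b<?N. c b) / ?N"
    using \<open>0 < ?N\<close> by (simp add: c_def sum_z_expectation)
  then have "(stab_fidelity n psi)\<^sup>2 \<le> (\<Sum>b<?N. (c b)\<^sup>2) / ?N"
    using sum_squared_le_sum_of_squares[of c "{..<?N}"]
    by (simp add: power_divide pos_divide_le_eq power2_eq_square qdim_def)
  also have "\<dots> = (\<Sum>b<?N. p_psi n psi (y b))"
    by (simp add: p sum_divide_distrib qdim_def)
  also have "\<dots> = (\<Sum>x\<in>y ` {..<?N}. p_psi n psi x)"
    by (simp add: sum.reindex[OF inj])
  also have "\<dots> \<le> (\<Sum>x\<in>weyl_set n phi. p_psi n psi x)"
    using sub p_psi_nonneg[OF psi] by (intro sum_mono2 finite_weyl_set) auto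
  finally show ?thesis .
qed

end
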